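(* For every positive integer $n$, $N'(n,1,n-1)=n$.
   Context: $\mathbb{Z}_4$ is the ring of integers modulo $4$; a $\mathbb{Z}_4$-code of length $n$ is a $\mathbb{Z}_4$-submodule of $\mathbb{Z}_4^n$. Two codes are equivalent if one is obtained from the other by permuting coordinates and changing the signs of some coordinates. Every $\mathbb{Z}_4$-code is permutation-equivalent to one with generator matrix $\begin{pmatrix} I_{k_1} & A & B \\ O & 2I_{k_2} & 2D\end{pmatrix}$ with $A,D$ $(0,1)$-matrices and $B$ a $\mathbb{Z}_4$-matrix; the code then has type $4^{k_1}2^{k_2}$. The trivial extension of a code $C$ of length $n-1$ is $\{(c,0)\mid c\in C\}$ (the only code of length $0$ is the zero code). $N'(n,k_1,k_2)$ denotes the number of equivalence classes of $\mathbb{Z}_4$-codes of length $n$ and type $4^{k_1}2^{k_2}$ that are not equivalent to the trivial extension of any $\mathbb{Z}_4$-code of length $n-1$. *)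

theory Defs
  imports Main "HOL-Library.Numeral_Type" "HOL-Combinatorics.Permutations"
begin

text \<open>Z4 is the type 4 from Numeral_Type (integers mod 4, a commutative ring).
  Vectors of length n are lists of length n over Z4, coordinates 0..n-1.\<close>

type_synonym z4vec = "4 list"

definition z4_vecs :: "nat \<Rightarrow> z4vec set" where
  "z4_vecs n = {v. length v = n}"

definition vadd :: "z4vec \<Rightarrow> z4vec \<Rightarrow> z4vec" where
  "vadd u v = map2 (+) u v"

definition vscale :: "4 \<Rightarrow> z4vec \<Rightarrow> z4vec" where
  "vscale a v = map (\<lambda>x. a * x) v"

definition is_z4_code :: "nat \<Rightarrow> z4vec set \<Rightarrow> bool" where
  "is_z4_code n C \<longleftrightarrow> C \<subseteq> z4_vecs n \<and> replicate n 0 \<in> C \<and>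
     (\<forall>u\<in>C. \<forall>v\<in>C. vadd u v \<in> C) \<and> (\<forall>a. \<forall>v\<in>C. vscale a v \<in> C)"

definition lin_comb :: "nat \<Rightarrow> z4vec list \<Rightarrow> (nat \<Rightarrow> 4) \<Rightarrow> z4vec" where
  "lin_comb n rows cs = map (\<lambda>j. \<Sum>i<length rows. cs i * (rows ! i ! j)) [0..<n]"

definition row_span :: "nat \<Rightarrow> z4vec list \<Rightarrow> z4vec set" where
  "row_span n rows = range (lin_comb n rows)"

text \<open>G (k1+k2 rows, n columns) has the standard form
  [[I_k1, A, B], [O, 2 I_k2, 2 D]] with A, D (0,1)-matrices and B arbitrary.\<close>
definition std_gen_matrix :: "nat \<Rightarrow> nat \<Rightarrow> nat \<Rightarrow> z4vec list \<Rightarrow> bool" where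
  "std_gen_matrix n k1 k2 G \<longleftrightarrow>
     k1 + k2 \<le> n \<and> length G = k1 + k2 \<and> (\<forall>r\<in>set G. length r = n) \<and>
     (\<forall>i<k1. \<forall>j<k1. G ! i ! j = (if i = j then 1 else 0)) \<and>
     (\<forall>i<k1. \<forall>j. k1 \<le> j \<and> j < k1 + k2 \<longrightarrow> G ! i ! j \<in> {0, 1}) \<and>
     (\<forall>i. k1 \<le> i \<and> i < k1 + k2 \<longrightarrow>
        (\<forall>j<k1. G ! i ! j = 0) \<and>
        (\<forall>j. k1 \<le> j \<and> j < k1 + k2 \<longrightarrow> G ! i ! j = (if i = j then 2 else 0)) \<and>
        (\<forall>j. k1 + k2 \<le> j \<and> j < n \<longrightarrow> G ! i ! j \<in> {0, 2}))"

definition perm_coords :: "nat \<Rightarrow> (nat \<Rightarrow> nat) \<Rightarrow> z4vec \<Rightarrow> z4vec" where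
  "perm_coords n \<sigma> v = map (\<lambda>j. v ! \<sigma> j) [0..<n]"

definition has_type :: "nat \<Rightarrow> z4vec set \<Rightarrow> nat \<Rightarrow> nat \<Rightarrow> bool" where
  "has_type n C k1 k2 \<longleftrightarrow>
     (\<exists>\<sigma> G. \<sigma> permutes {..<n} \<and> std_gen_matrix n k1 k2 G \<and>
        C = perm_coords n \<sigma> ` row_span n G)"

definition z4_equiv :: "nat \<Rightarrow> z4vec set \<Rightarrow> z4vec set \<Rightarrow> bool" where
  "z4_equiv n C D \<longleftrightarrow>
     (\<exists>\<sigma> s. \<sigma> permutes {..<n} \<and> (\<forall>j. s j \<in> {1, -1 :: 4}) \<and>
        D = (\<lambda>v. map (\<lambda>j. s j * v ! \<sigma> j) [0..<n]) ` C)"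

definition trivial_ext :: "z4vec set \<Rightarrow> z4vec set" where
  "trivial_ext C = (\<lambda>c. c @ [0]) ` C"

definition nontriv_codes :: "nat \<Rightarrow> nat \<Rightarrow> nat \<Rightarrow> z4vec set set" where
  "nontriv_codes n k1 k2 = {C. is_z4_code n C \<and> has_type n C k1 k2 \<and>
     \<not> (\<exists>D. is_z4_code (n - 1) D \<and> z4_equiv n C (trivial_ext D))}"

definition N' :: "nat \<Rightarrow> nat \<Rightarrow> nat \<Rightarrow> nat" where
  "N' n k1 k2 = card (nontriv_codes n k1 k2 // {(C, D). z4_equiv n C D})"

end

theory Submission
  imports Defs
begin

text \<open>
  Reducing the generator matrix modulo 2 shows that a code of type \<open>4\<^sup>1 2\<^sup>n\<^sup>-\<^sup>1\<close> is
  determined by the support \<open>T \<noteq> {}\<close> of its first row mod 2: since the rows \<open>2 e\<^sub>j\<close>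
  contribute every even word, the code consists of the words that are even outside \<open>T\<close>
  and of constant parity on \<open>T\<close>. Permuting coordinates and changing signs just moves
  \<open>T\<close>, so the equivalence classes are indexed by \<open>|T| \<in> {1..n}\<close>. None of them is a
  trivial extension, because the all-2 word lies in every such code.
\<close>

lemma z4_cases: "(x::4) = 0 \<or> x = 1 \<or> x = 2 \<or> x = 3"
proof (induct x)
  case (of_int z)
  then have "z = 0 \<or> z = 1 \<or> z = 2 \<or> z = 3" by auto
  then show ?case by auto
qed

definition z4_even :: "4 \<Rightarrow> bool" where
  "z4_even x \<longleftrightarrow> x = 0 \<or> x = 2"

lemma z4_even_simps [simp]: "z4_even 0" "z4_even 2" "\<not> z4_even 1"
  by (auto simp: z4_even_def)

lemma z4_even_add: "z4_even (x + y) \<longleftrightarrow> (z4_even x \<longleftrightarrow> z4_even y)"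
  and z4_even_diff: "z4_even (x - y) \<longleftrightarrow> (z4_even x \<longleftrightarrow> z4_even y)"
  and z4_even_mult: "z4_even (x * y) \<longleftrightarrow> z4_even x \<or> z4_even y"
  using z4_cases[of x] z4_cases[of y] by (auto simp: z4_even_def)

lemma z4_even_sign_mult: "s \<in> {1, -1} \<Longrightarrow> z4_even (s * x) \<longleftrightarrow> z4_even x"
  using z4_cases[of x] by (auto simp: z4_even_def)

lemma z4_even_eq_double: "z4_even x \<Longrightarrow> 2 * (if x = 2 then 1 else 0) = x"
  by (auto simp: z4_even_def)

definition parity_code :: "nat \<Rightarrow> nat set \<Rightarrow> z4vec set" where
  "parity_code n T = {u. length u = n \<and> (\<forall>j<n. j \<notin> T \<longrightarrow> z4_even (u!j)) \<and>
     (\<forall>j\<in>T. \<forall>k\<in>T. z4_even (u!j) = z4_even (u!k))}"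

lemma parity_codeI:
  assumes "length u = n" "\<And>j. j < n \<Longrightarrow> j \<notin> T \<Longrightarrow> z4_even (u!j)"
    "\<And>j k. j \<in> T \<Longrightarrow> k \<in> T \<Longrightarrow> z4_even (u!j) = z4_even (u!k)"
  shows "u \<in> parity_code n T"
  using assms unfolding parity_code_def by blast

lemma parity_codeD:
  assumes "u \<in> parity_code n T"
  shows parity_code_length: "length u = n"
    and parity_code_even: "j < n \<Longrightarrow> j \<notin> T \<Longrightarrow> z4_even (u!j)"
    and parity_code_same_parity: "j \<in> T \<Longrightarrow> k \<in> T \<Longrightarrow> z4_even (u!j) = z4_even (u!k)"
  using assms unfolding parity_code_def by blast+

lemma parity_code_is_z4_code:
  assumes T: "T \<subseteq> {..<n}"
  shows "is_z4_code n (parity_code n T)"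
  unfolding is_z4_code_def
proof (intro conjI ballI allI)
  show "parity_code n T \<subseteq> z4_vecs n"
    by (auto simp: parity_code_def z4_vecs_def)
  show "replicate n 0 \<in> parity_code n T"
    using T by (intro parity_codeI) auto
  fix u v assume u: "u \<in> parity_code n T" and v: "v \<in> parity_code n T"
  have nth: "vadd u v ! j = u!j + v!j" if "j < n" for j
    using that u v by (simp add: vadd_def parity_code_length)
  show "vadd u v \<in> parity_code n T"
  proof (rule parity_codeI)
    show "length (vadd u v) = n"
      using u v by (simp add: vadd_def parity_code_length)
  next
    fix j assume "j < n" "j \<notin> T"
    then show "z4_even (vadd u v ! j)"
      using parity_code_even[OF u] parity_code_even[OF v] nth by (simp add: z4_even_add)
  next
    fix j k assume jk: "j \<in> T" "k \<in> T"
    then have "j < n" "k < n" using T by auto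
    then show "z4_even (vadd u v ! j) = z4_even (vadd u v ! k)"
      using parity_code_same_parity[OF u jk] parity_code_same_parity[OF v jk] nth
      by (simp add: z4_even_add)
  qed
next
  fix a v assume v: "v \<in> parity_code n T"
  have nth: "vscale a v ! j = a * v!j" if "j < n" for j
    using that v by (simp add: vscale_def parity_code_length)
  show "vscale a v \<in> parity_code n T"
  proof (rule parity_codeI)
    show "length (vscale a v) = n"
      using v by (simp add: vscale_def parity_code_length)
  next
    fix j assume "j < n" "j \<notin> T"
    then show "z4_even (vscale a v ! j)"
      using parity_code_even[OF v] nth by (simp add: z4_even_mult)
  next
    fix j k assume jk: "j \<in> T" "k \<in> T"
    then have "j < n" "k < n" using T by auto
    then show "z4_even (vscale a v ! j) = z4_even (vscale a v ! k)"
      using parity_code_same_parity[OF v jk] nth by (simp add: z4_even_mult)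
  qed
qed

lemma odd_coords_parity_code:
  assumes T: "T \<subseteq> {..<n}"
  shows "{j. j < n \<and> (\<exists>u\<in>parity_code n T. \<not> z4_even (u!j))} = T"
proof
  show "T \<subseteq> {j. j < n \<and> (\<exists>u\<in>parity_code n T. \<not> z4_even (u!j))}"
  proof
    fix j assume j: "j \<in> T"
    let ?u = "map (\<lambda>i. if i \<in> T then 1 else 0) [0..<n] :: z4vec"
    have "?u \<in> parity_code n T"
      using T by (intro parity_codeI) auto
    moreover have "\<not> z4_even (?u ! j)"
      using j T by auto
    ultimately show "j \<in> {j. j < n \<and> (\<exists>u\<in>parity_code n T. \<not> z4_even (u!j))}"
      using j T by blast
  qed
qed (use parity_code_even in blast)

lemma parity_code_inj:
  assumes "T \<subseteq> {..<n}" "T' \<subseteq> {..<n}" "parity_code n T = parity_code n T'"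
  shows "T = T'"
proof -
  have "T = {j. j < n \<and> (\<exists>u\<in>parity_code n T. \<not> z4_even (u!j))}"
    using odd_coords_parity_code[OF assms(1)] by simp
  also have "\<dots> = T'"
    unfolding assms(3) by (rule odd_coords_parity_code[OF assms(2)])
  finally show ?thesis .
qed

lemma replicate_2_in_parity_code:
  assumes "T \<subseteq> {..<n}"
  shows "replicate n 2 \<in> parity_code n T"
  using assms by (intro parity_codeI) auto

lemma signed_perm_image_parity_code:
  assumes \<sigma>: "\<sigma> permutes {..<n}" and s: "\<forall>j. s j \<in> {1, -1 :: 4}" and T: "T \<subseteq> {..<n}"
  shows "(\<lambda>v. map (\<lambda>j. s j * v ! \<sigma> j) [0..<n]) ` parity_code n T
           = parity_code n {j. j < n \<and> \<sigma> j \<in> T}"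
    (is "?f ` _ = parity_code n ?T'")
proof
  have \<sigma>_lt: "\<sigma> j < n" if "j < n" for j
    using permutes_in_image[OF \<sigma>] that by auto
  show "?f ` parity_code n T \<subseteq> parity_code n ?T'"
  proof (rule image_subsetI, rule parity_codeI)
    fix v assume v: "v \<in> parity_code n T"
    show "length (?f v) = n" by simp
    show "z4_even (?f v ! j)" if "j < n" "j \<notin> ?T'" for j
      using that \<sigma>_lt parity_code_even[OF v] s by (simp add: z4_even_sign_mult)
    show "z4_even (?f v ! j) = z4_even (?f v ! k)" if "j \<in> ?T'" "k \<in> ?T'" for j k
    proof -
      have "j < n" "k < n" "\<sigma> j \<in> T" "\<sigma> k \<in> T" using that by auto
      then show ?thesis
        using parity_code_same_parity[OF v, of "\<sigma> j" "\<sigma> k"] s by (simp add: z4_even_sign_mult)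
    qed
  qed
next
  have inv_lt: "inv \<sigma> i < n" if "i < n" for i
    using permutes_in_image[OF permutes_inv[OF \<sigma>]] that by auto
  note \<sigma>_inv = permutes_inverses(1)[OF \<sigma>]
  show "parity_code n ?T' \<subseteq> ?f ` parity_code n T"
  proof
    fix w assume w: "w \<in> parity_code n ?T'"
    define v where "v = map (\<lambda>i. s (inv \<sigma> i) * w ! (inv \<sigma> i)) [0..<n]"
    have "?f v = w"
    proof (rule nth_equalityI)
      show "length (?f v) = length w"
        using w by (simp add: parity_code_length)
    next
      fix j assume "j < length (?f v)"
      then have j: "j < n" by simp
      then have "\<sigma> j < n"
        using permutes_in_image[OF \<sigma>] by auto
      moreover have "s j * s j = 1"
        using s[rule_format, of j] by auto
      ultimately show "?f v ! j = w ! j"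
        using j by (simp add: v_def permutes_inverses(2)[OF \<sigma>] mult.assoc[symmetric])
    qed
    moreover have "v \<in> parity_code n T"
    proof (rule parity_codeI)
      show "length v = n" by (simp add: v_def)
    next
      fix i assume i: "i < n" "i \<notin> T"
      have "inv \<sigma> i \<notin> ?T'"
        using \<sigma>_inv[of i] i(2) by auto
      then have "z4_even (w ! inv \<sigma> i)"
        using parity_code_even[OF w] inv_lt[OF i(1)] by blast
      then show "z4_even (v!i)"
        using i(1) s by (simp add: v_def z4_even_sign_mult)
    next
      fix i k assume ik: "i \<in> T" "k \<in> T"
      then have "inv \<sigma> i \<in> ?T'" "inv \<sigma> k \<in> ?T'"
        using T inv_lt \<sigma>_inv by auto
      then have "z4_even (w ! inv \<sigma> i) = z4_even (w ! inv \<sigma> k)"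
        by (rule parity_code_same_parity[OF w])
      moreover have "i < n" "k < n" using T ik by auto
      ultimately show "z4_even (v!i) = z4_even (v!k)"
        using s by (simp add: v_def z4_even_sign_mult)
    qed
    ultimately show "w \<in> ?f ` parity_code n T" by blast
  qed
qed

lemma perm_coords_image_parity_code:
  assumes "\<sigma> permutes {..<n}" "T \<subseteq> {..<n}"
  shows "perm_coords n \<sigma> ` parity_code n T = parity_code n {j. j < n \<and> \<sigma> j \<in> T}"
proof -
  have "perm_coords n \<sigma> = (\<lambda>v. map (\<lambda>j. (\<lambda>_. 1::4) j * v ! \<sigma> j) [0..<n])"
    by (simp add: fun_eq_iff perm_coords_def)
  then show ?thesis
    using signed_perm_image_parity_code[OF assms(1) _ assms(2), of "\<lambda>_. 1"] by simp
qed

lemma exists_permutes_image: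
  assumes S: "finite S" and T: "T \<subseteq> S" and T': "T' \<subseteq> S" and c: "card T' = card T"
  shows "\<exists>\<sigma>. \<sigma> permutes S \<and> \<sigma> ` T' = T"
proof -
  have fin: "finite T" "finite T'"
    using finite_subset[OF T S] finite_subset[OF T' S] by auto
  obtain f where f: "bij_betw f T' T"
    using finite_same_card_bij[OF fin(2) fin(1)] c by auto
  have "card (S - T') = card (S - T)"
    using T T' c fin by (simp add: card_Diff_subset)
  then obtain g where g: "bij_betw g (S - T') (S - T)"
    using finite_same_card_bij[of "S - T'" "S - T"] S by auto
  define \<sigma> where "\<sigma> x = (if x \<in> T' then f x else if x \<in> S then g x else x)" for x
  have b1: "bij_betw \<sigma> T' T"
    using f by (rule bij_betw_cong[THEN iffD1, rotated]) (simp add: \<sigma>_def)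
  have b2: "bij_betw \<sigma> (S - T') (S - T)"
    using g by (rule bij_betw_cong[THEN iffD1, rotated]) (simp add: \<sigma>_def)
  have "bij_betw \<sigma> (T' \<union> (S - T')) (T \<union> (S - T))"
    by (rule bij_betw_combine[OF b1 b2]) auto
  then have "bij_betw \<sigma> S S"
    using T T' by (simp add: Un_Diff_cancel2 sup.absorb2)
  then have "\<sigma> permutes S"
    by (rule bij_imp_permutes) (use T' in \<open>auto simp: \<sigma>_def\<close>)
  moreover have "\<sigma> ` T' = T"
    using b1 by (simp add: bij_betw_def)
  ultimately show ?thesis by blast
qed

lemma permutes_preimage_image:
  assumes "\<sigma> permutes {..<n}" "T \<subseteq> {..<n}"
  shows "{j. j < n \<and> \<sigma> j \<in> \<sigma> ` T} = T"
  using assms permutes_inj[OF assms(1)] by (auto simp: inj_eq)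

lemma card_permutes_preimage:
  assumes \<sigma>: "\<sigma> permutes {..<n}" and T: "T \<subseteq> {..<n}"
  shows "card {j. j < n \<and> \<sigma> j \<in> T} = card T"
proof -
  have "{j. j < n \<and> \<sigma> j \<in> T} = \<sigma> -` T"
    using T permutes_in_image[OF \<sigma>] by auto
  then show ?thesis
    using card_vimage_inj[OF permutes_inj[OF \<sigma>]] permutes_surj[OF \<sigma>] by simp
qed

lemma lin_comb_std_gen_matrix_nth:
  assumes n: "n \<ge> 1" and G: "std_gen_matrix n 1 (n-1) G" and j: "j < n"
  shows "lin_comb n G cs ! j = cs 0 * G!0!j + (if j = 0 then 0 else 2 * cs j)"
proof -
  obtain m where m: "n = Suc m"
    using n by (cases n) auto
  have rows: "G!Suc i!j = (if Suc i = j then 2 else 0)" if "i < m" for i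
    using G that j m unfolding std_gen_matrix_def by (cases "j = 0") auto
  have "lin_comb n G cs ! j = (\<Sum>i<n. cs i * (G ! i ! j))"
    using j G n by (simp add: lin_comb_def std_gen_matrix_def)
  also have "\<dots> = cs 0 * G!0!j + (\<Sum>i<m. cs (Suc i) * (G ! Suc i ! j))"
    unfolding m by (rule sum.lessThan_Suc_shift)
  also have "(\<Sum>i<m. cs (Suc i) * (G ! Suc i ! j)) = (\<Sum>i<m. if i = j - 1 \<and> j \<noteq> 0 then 2 * cs j else 0)"
    by (rule sum.cong) (auto simp: rows)
  also have "\<dots> = (if j = 0 then 0 else 2 * cs j)"
    using j m by (auto simp: sum.delta')
  finally show ?thesis .
qed

lemma parity_code_subset_row_span:
  assumes n: "n \<ge> 1" and G: "std_gen_matrix n 1 (n-1) G"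
  shows "parity_code n {j. j < n \<and> G!0!j = 1} \<subseteq> row_span n G"
proof
  let ?T = "{j. j < n \<and> G!0!j = 1}"
  have g00: "G!0!0 = 1"
    using G n unfolding std_gen_matrix_def by simp
  have g0j: "G!0!j \<in> {0,1}" if "1 \<le> j" "j < n" for j
    using G n that unfolding std_gen_matrix_def by simp
  fix u assume u: "u \<in> parity_code n ?T"
  \<comment> \<open>the first coefficient fixes the parities, the rows \<open>2 e\<^sub>j\<close> then correct each entry\<close>
  define cs where "cs i = (if i = 0 then u!0 else if u!i - u!0 * G!0!i = 2 then 1 else 0)" for i
  have "lin_comb n G cs = u"
  proof (rule nth_equalityI)
    show "length (lin_comb n G cs) = length u"
      using u by (simp add: lin_comb_def parity_code_length)
  next
    fix j assume "j < length (lin_comb n G cs)"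
    then have j: "j < n" by (simp add: lin_comb_def)
    show "lin_comb n G cs ! j = u ! j"
    proof (cases "j = 0")
      case True
      then show ?thesis
        using lin_comb_std_gen_matrix_nth[OF n G j] g00 by (simp add: cs_def)
    next
      case False
      have "z4_even (u!j - u!0 * G!0!j)"
      proof (cases "G!0!j = 1")
        case True
        then have "j \<in> ?T" "0 \<in> ?T"
          using j g00 by auto
        then show ?thesis
          using True parity_code_same_parity[OF u, of j 0] by (simp add: z4_even_diff)
      next
        case not_one: False
        then have "G!0!j = 0"
          using g0j[of j] j False by auto
        then show ?thesis
          using parity_code_even[OF u j] not_one by simp
      qed
      from z4_even_eq_double[OF this] show ?thesis
        using lin_comb_std_gen_matrix_nth[OF n G j] False by (simp add: cs_def)
    qed
  qed
  then show "u \<in> row_span n G"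
    unfolding row_span_def by (metis rangeI)
qed

lemma row_span_std_gen_matrix:
  assumes n: "n \<ge> 1" and G: "std_gen_matrix n 1 (n-1) G"
  shows "row_span n G = parity_code n {j. j < n \<and> G!0!j = 1}"
proof
  let ?T = "{j. j < n \<and> G!0!j = 1}"
  have g00: "G!0!0 = 1"
    using G n unfolding std_gen_matrix_def by simp
  have g0j: "G!0!j = 0" and "j \<noteq> 0" if "j < n" "j \<notin> ?T" for j
  proof -
    show "j \<noteq> 0"
      using that g00 by (intro notI) simp
    then have "G!0!j \<in> {0,1}"
      using G that(1) unfolding std_gen_matrix_def by simp
    then show "G!0!j = 0"
      using that by auto
  qed
  show "row_span n G \<subseteq> parity_code n ?T"
  proof
    fix u assume "u \<in> row_span n G"
    then obtain cs where u: "u = lin_comb n G cs"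
      by (auto simp: row_span_def)
    show "u \<in> parity_code n ?T"
    proof (rule parity_codeI)
      show "length u = n"
        using u by (simp add: lin_comb_def)
    next
      fix j assume "j < n" "j \<notin> ?T"
      then show "z4_even (u!j)"
        using lin_comb_std_gen_matrix_nth[OF n G \<open>j < n\<close>, of cs] g0j u by (simp add: z4_even_mult)
    next
      have "z4_even (u!j) = z4_even (cs 0)" if "j \<in> ?T" for j
        using that lin_comb_std_gen_matrix_nth[OF n G, of j cs] u by (auto simp: z4_even_add z4_even_mult)
      then show "z4_even (u!j) = z4_even (u!k)" if "j \<in> ?T" "k \<in> ?T" for j k
        using that by simp
    qed
  qed
qed (rule parity_code_subset_row_span[OF n G])

lemma std_gen_matrix_with_support:
  assumes k: "1 \<le> k" "k \<le> n"
  shows "\<exists>G. std_gen_matrix n 1 (n-1) G \<and> {j. j < n \<and> G!0!j = 1} = {..<k}"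
proof -
  define G :: "z4vec list" where
    "G = map (\<lambda>i. map (\<lambda>j. if i = 0 then (if j < k then 1 else 0) else if j = i then 2 else 0) [0..<n]) [0..<n]"
  have "std_gen_matrix n 1 (n-1) G"
    using k unfolding std_gen_matrix_def by (auto simp: G_def)
  moreover have "{j. j < n \<and> G!0!j = 1} = {..<k}"
    using k by (auto simp: G_def split: if_split_asm)
  ultimately show ?thesis by blast
qed

lemma has_type_1_iff_parity_code:
  assumes n: "n \<ge> 1"
  shows "has_type n C 1 (n-1) \<longleftrightarrow> (\<exists>T. T \<subseteq> {..<n} \<and> T \<noteq> {} \<and> C = parity_code n T)"
proof
  assume "has_type n C 1 (n-1)"
  then obtain \<sigma> G where \<sigma>: "\<sigma> permutes {..<n}" and G: "std_gen_matrix n 1 (n-1) G"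
    and C: "C = perm_coords n \<sigma> ` row_span n G"
    unfolding has_type_def by blast
  let ?T0 = "{j. j < n \<and> G!0!j = 1}"
  have "0 \<in> ?T0"
    using G n unfolding std_gen_matrix_def by simp
  then have "inv \<sigma> 0 \<in> {j. j < n \<and> \<sigma> j \<in> ?T0}"
    using permutes_inverses(1)[OF \<sigma>] permutes_in_image[OF permutes_inv[OF \<sigma>]] by auto
  moreover have "C = parity_code n {j. j < n \<and> \<sigma> j \<in> ?T0}"
    unfolding C row_span_std_gen_matrix[OF n G] by (rule perm_coords_image_parity_code[OF \<sigma>]) auto
  ultimately show "\<exists>T. T \<subseteq> {..<n} \<and> T \<noteq> {} \<and> C = parity_code n T"
    by (intro exI[of _ "{j. j < n \<and> \<sigma> j \<in> ?T0}"]) blast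
next
  assume "\<exists>T. T \<subseteq> {..<n} \<and> T \<noteq> {} \<and> C = parity_code n T"
  then obtain T where T: "T \<subseteq> {..<n}" "T \<noteq> {}" and C: "C = parity_code n T"
    by blast
  have k: "1 \<le> card T" "card T \<le> n"
    using T finite_subset[OF T(1)] card_mono[OF _ T(1)] by (auto simp: Suc_le_eq card_gt_0_iff)
  obtain G where G: "std_gen_matrix n 1 (n-1) G" and G0: "{j. j < n \<and> G!0!j = 1} = {..<card T}"
    using std_gen_matrix_with_support[OF k] by blast
  obtain \<sigma> where \<sigma>: "\<sigma> permutes {..<n}" and \<sigma>T: "\<sigma> ` T = {..<card T}"
    using exists_permutes_image[of "{..<n}" "{..<card T}" T] T k by auto
  have "perm_coords n \<sigma> ` row_span n G = parity_code n {j. j < n \<and> \<sigma> j \<in> \<sigma> ` T}"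
    unfolding row_span_std_gen_matrix[OF n G] G0 \<sigma>T[symmetric]
    by (rule perm_coords_image_parity_code[OF \<sigma>]) (simp add: \<sigma>T k)
  also have "\<dots> = C"
    unfolding C permutes_preimage_image[OF \<sigma> T(1)] ..
  finally show "has_type n C 1 (n-1)"
    unfolding has_type_def using \<sigma> G by blast
qed

definition parity_codes_of_size :: "nat \<Rightarrow> nat \<Rightarrow> z4vec set set" where
  "parity_codes_of_size n k = {parity_code n T | T. T \<subseteq> {..<n} \<and> card T = k}"

lemma z4_equiv_parity_code_iff:
  assumes T: "T \<subseteq> {..<n}"
  shows "z4_equiv n (parity_code n T) D \<longleftrightarrow> D \<in> parity_codes_of_size n (card T)"
proof
  assume "z4_equiv n (parity_code n T) D"
  then obtain \<sigma> s where \<sigma>: "\<sigma> permutes {..<n}" and s: "\<forall>j. s j \<in> {1, -1 :: 4}"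
    and D: "D = (\<lambda>v. map (\<lambda>j. s j * v ! \<sigma> j) [0..<n]) ` parity_code n T"
    unfolding z4_equiv_def by blast
  have "D = parity_code n {j. j < n \<and> \<sigma> j \<in> T}"
    unfolding D by (rule signed_perm_image_parity_code[OF \<sigma> s T])
  then show "D \<in> parity_codes_of_size n (card T)"
    unfolding parity_codes_of_size_def using card_permutes_preimage[OF \<sigma> T] by blast
next
  assume "D \<in> parity_codes_of_size n (card T)"
  then obtain T' where T': "T' \<subseteq> {..<n}" "card T' = card T" and D: "D = parity_code n T'"
    unfolding parity_codes_of_size_def by blast
  obtain \<sigma> where \<sigma>: "\<sigma> permutes {..<n}" and \<sigma>T': "\<sigma> ` T' = T"
    using exists_permutes_image[OF _ T T'(1) T'(2)] by blast
  have "perm_coords n \<sigma> ` parity_code n T = parity_code n {j. j < n \<and> \<sigma> j \<in> \<sigma> ` T'}"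
    using perm_coords_image_parity_code[OF \<sigma> T] \<sigma>T' by simp
  also have "\<dots> = D"
    unfolding permutes_preimage_image[OF \<sigma> T'(1)] D ..
  finally have "perm_coords n \<sigma> ` parity_code n T = D" .
  then show "z4_equiv n (parity_code n T) D"
    unfolding z4_equiv_def perm_coords_def
    by (intro exI[of _ \<sigma>] exI[of _ "\<lambda>_. 1"] conjI) (use \<sigma> in auto)
qed

lemma parity_code_not_equiv_trivial_ext:
  assumes T: "T \<subseteq> {..<n}"
  shows "\<not> z4_equiv n (parity_code n T) (trivial_ext D)"
proof
  assume "z4_equiv n (parity_code n T) (trivial_ext D)"
  then obtain T' where "T' \<subseteq> {..<n}" and "trivial_ext D = parity_code n T'"
    using z4_equiv_parity_code_iff[OF T] unfolding parity_codes_of_size_def by blast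
  then have "replicate n 2 \<in> (\<lambda>c. c @ [0]) ` D"
    using replicate_2_in_parity_code unfolding trivial_ext_def by blast
  then obtain c where "replicate n (2::4) = c @ [0]"
    by blast
  then have "(0::4) \<in> set (replicate n 2)"
    by simp
  then show False
    by simp
qed

lemma nontriv_codes_1:
  assumes n: "n \<ge> 1"
  shows "nontriv_codes n 1 (n-1) = {parity_code n T | T. T \<subseteq> {..<n} \<and> T \<noteq> {}}"
  using parity_code_is_z4_code parity_code_not_equiv_trivial_ext
  unfolding nontriv_codes_def has_type_1_iff_parity_code[OF n] by blast

lemma quotient_nontriv_codes_1:
  assumes n: "n \<ge> 1"
  shows "nontriv_codes n 1 (n-1) // {(C, D). z4_equiv n C D} = parity_codes_of_size n ` {1..n}"
proof -
  have equiv_class: "{(C, D). z4_equiv n C D} `` {parity_code n T} = parity_codes_of_size n (card T)"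
    if "T \<subseteq> {..<n}" for T
    using z4_equiv_parity_code_iff[OF that] by auto
  have sizes: "card ` {T. T \<subseteq> {..<n} \<and> T \<noteq> {}} = {1..n}"
  proof
    show "card ` {T. T \<subseteq> {..<n} \<and> T \<noteq> {}} \<subseteq> {1..n}"
      using card_mono[of "{..<n}"] finite_subset[of _ "{..<n}"]
      by (auto simp: Suc_le_eq card_gt_0_iff)
    show "{1..n} \<subseteq> card ` {T. T \<subseteq> {..<n} \<and> T \<noteq> {}}"
    proof
      fix k assume "k \<in> {1..n}"
      then show "k \<in> card ` {T. T \<subseteq> {..<n} \<and> T \<noteq> {}}"
        by (intro image_eqI[of _ _ "{..<k}"]) (auto simp: lessThan_empty_iff)
    qed
  qed
  have "nontriv_codes n 1 (n-1) // {(C, D). z4_equiv n C D}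
        = (\<lambda>T. parity_codes_of_size n (card T)) ` {T. T \<subseteq> {..<n} \<and> T \<noteq> {}}"
    unfolding nontriv_codes_1[OF n] quotient_def using equiv_class by blast
  also have "\<dots> = parity_codes_of_size n ` {1..n}"
    unfolding sizes[symmetric] image_image ..
  finally show ?thesis .
qed

lemma inj_on_parity_codes_of_size: "inj_on (parity_codes_of_size n) {..n}"
proof
  fix k k' assume k: "k \<in> {..n}" and "parity_codes_of_size n k = parity_codes_of_size n k'"
  moreover have "parity_code n {..<k} \<in> parity_codes_of_size n k"
    using k unfolding parity_codes_of_size_def by auto
  ultimately obtain T where "T \<subseteq> {..<n}" "card T = k'" "parity_code n {..<k} = parity_code n T"
    unfolding parity_codes_of_size_def by auto
  then show "k = k'"
    using parity_code_inj[of "{..<k}" n T] k by auto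
qed

theorem mainTheorem5:
  fixes n :: nat
  assumes "n \<ge> 1"
  shows "N' n 1 (n - 1) = n"
proof -
  have "inj_on (parity_codes_of_size n) {1..n}"
    using inj_on_parity_codes_of_size by (rule inj_on_subset) auto
  then show ?thesis
    unfolding N'_def quotient_nontriv_codes_1[OF assms] by (simp add: card_image)
qed

end
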